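(* Let $N\ge2$ and let $C\subset\mathbb{P}^N$ be an irreducible curve with $C\cap\Delta_{N-2}=\emptyset$. Then every coordinate point $p$ of $\mathbb{P}^N$ (e.g. $p=(1:0:\cdots:0)$) satisfies $\operatorname{Hrk}_C(p)=N$.
   Context: Hadamard product: $(p_0:\cdots:p_N)\star(q_0:\cdots:q_N)=(p_0q_0:\cdots:p_Nq_N)$, defined when not all $p_iq_i$ vanish. $\operatorname{Hrk}_C(q)=\min\{m\mid q=p_1\star\cdots\star p_m,\ p_i\in C\}$ ($\infty$ if none). $\Delta_{N-2}\subset\mathbb{P}^N$ is the set of points with at least two coordinates equal to zero. *)

theory Defs
  imports Complex_Main "HOL-Library.Extended_Nat"
begin

text \<open>Points of P^N over the complex numbers are represented by their homogeneous
coordinate vectors: functions x :: nat => complex with x i = 0 for i > N and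
some coordinate x i, i <= N, nonzero.\<close>

definition Pvec :: "nat \<Rightarrow> (nat \<Rightarrow> complex) set" where
  "Pvec N = {x. (\<forall>i>N. x i = 0) \<and> (\<exists>i\<le>N. x i \<noteq> 0)}"

definition proj_eq :: "(nat \<Rightarrow> complex) \<Rightarrow> (nat \<Rightarrow> complex) \<Rightarrow> bool" where
  "proj_eq x y \<longleftrightarrow> (\<exists>c. c \<noteq> 0 \<and> x = (\<lambda>i. c * y i))"

text \<open>Homogeneous polynomials of degree d in x_0..x_N: finitely supported coefficient
functions on exponent vectors alpha with alpha i = 0 for i > N and total degree d.\<close>

definition is_hpoly :: "nat \<Rightarrow> nat \<Rightarrow> ((nat \<Rightarrow> nat) \<Rightarrow> complex) \<Rightarrow> bool" where
  "is_hpoly N d f \<longleftrightarrow> finite {a. f a \<noteq> 0} \<and>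
     (\<forall>a. f a \<noteq> 0 \<longrightarrow> (\<forall>i>N. a i = 0) \<and> (\<Sum>i\<le>N. a i) = d)"

definition peval :: "nat \<Rightarrow> ((nat \<Rightarrow> nat) \<Rightarrow> complex) \<Rightarrow> (nat \<Rightarrow> complex) \<Rightarrow> complex" where
  "peval N f x = (\<Sum>a\<in>{a. f a \<noteq> 0}. f a * (\<Prod>i\<le>N. x i ^ a i))"

text \<open>Zariski closed subsets of P^N (as cones of representatives).\<close>

definition zclosed :: "nat \<Rightarrow> (nat \<Rightarrow> complex) set \<Rightarrow> bool" where
  "zclosed N S \<longleftrightarrow> (\<exists>F. (\<forall>(d, f)\<in>F. is_hpoly N d f) \<and>
      S = {x \<in> Pvec N. \<forall>(d, f)\<in>F. peval N f x = 0})"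

definition zirred :: "nat \<Rightarrow> (nat \<Rightarrow> complex) set \<Rightarrow> bool" where
  "zirred N S \<longleftrightarrow> zclosed N S \<and> S \<noteq> {} \<and>
     (\<forall>A B. zclosed N A \<and> zclosed N B \<and> S = A \<union> B \<longrightarrow> S = A \<or> S = B)"

text \<open>An irreducible curve: an irreducible projective variety of (Krull) dimension 1,
i.e. the longest chain of irreducible closed subsets ending in C has length exactly 1.\<close>

definition irred_curve :: "nat \<Rightarrow> (nat \<Rightarrow> complex) set \<Rightarrow> bool" where
  "irred_curve N C \<longleftrightarrow> zirred N C \<and>
     (\<exists>Z0. zirred N Z0 \<and> Z0 \<subset> C) \<and>
     \<not> (\<exists>Z0 Z1. zirred N Z0 \<and> zirred N Z1 \<and> Z0 \<subset> Z1 \<and> Z1 \<subset> C)"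

definition Delta :: "nat \<Rightarrow> (nat \<Rightarrow> complex) set" where
  "Delta N = {x \<in> Pvec N. \<exists>i j. i \<le> N \<and> j \<le> N \<and> i \<noteq> j \<and> x i = 0 \<and> x j = 0}"

definition hprod_list :: "(nat \<Rightarrow> complex) list \<Rightarrow> nat \<Rightarrow> complex" where
  "hprod_list ps = (\<lambda>i. \<Prod>p\<leftarrow>ps. p i)"

definition hrep :: "nat \<Rightarrow> (nat \<Rightarrow> complex) set \<Rightarrow> (nat \<Rightarrow> complex) \<Rightarrow> nat \<Rightarrow> bool" where
  "hrep N C q m \<longleftrightarrow> m \<ge> 1 \<and> (\<exists>ps. length ps = m \<and> set ps \<subseteq> C \<and>
      hprod_list ps \<in> Pvec N \<and> proj_eq q (hprod_list ps))"

definition Hrk :: "nat \<Rightarrow> (nat \<Rightarrow> complex) set \<Rightarrow> (nat \<Rightarrow> complex) \<Rightarrow> enat" where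
  "Hrk N C q = (if \<exists>m. hrep N C q m then enat (LEAST m. hrep N C q m) else \<infinity>)"

definition coord_point :: "nat \<Rightarrow> nat \<Rightarrow> complex" where
  "coord_point k = (\<lambda>i. if i = k then 1 else 0)"

end

(* A point of C on a hyperplane x_j = 0 has all its other coordinates nonzero, as C avoids
   Delta_{N-2}; so the Hadamard product of points of C on the hyperplanes x_j = 0, j distinct from k,
   is a multiple of the coordinate point e_k. Conversely, in a product equal to e_k every
   coordinate i other than k vanishes in some factor, and no factor vanishes in two coordinates,
   so there are at least N factors.

   The geometric input is that C meets every hyperplane x_j = 0. Otherwise, for i distinct from j,
   clearing all coordinates but x_i and x_j projects C, one coordinate at a time, onto a closed
   subset of a line; the centres of these projections are not on the images because C avoids
   Delta_{N-2}, so the images are closed by elimination with resultants. The final image misses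
   the point x_j = 0, hence is finite: x_i / x_j takes finitely many values on C, hence only one
   since C is irreducible. Then C is a single point, which contradicts dim C = 1. *)

theory Submission
  imports Defs "Subresultants.Subresultant_Gcd" "HOL-Computational_Algebra.Fundamental_Theorem_Algebra"
    "HOL-Computational_Algebra.Field_as_Ring"
begin

section \<open>Polynomial functions\<close>

definition monomial :: "nat \<Rightarrow> (nat \<Rightarrow> nat) \<Rightarrow> (nat \<Rightarrow> complex) \<Rightarrow> complex" where
  "monomial N a x = (\<Prod>i\<le>N. x i ^ a i)"

lemma peval_eq_sum_monomial: "peval N f x = (\<Sum>a\<in>{a. f a \<noteq> 0}. f a * monomial N a x)"
  by (simp add: peval_def monomial_def)

lemma peval_eq_sum_superset:
  assumes "finite T" "{a. f a \<noteq> 0} \<subseteq> T"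
  shows "peval N f x = (\<Sum>a\<in>T. f a * monomial N a x)"
  unfolding peval_eq_sum_monomial using assms by (intro sum.mono_neutral_left) auto

lemma monomial_add: "monomial N (\<lambda>i. a i + b i) x = monomial N a x * monomial N b x"
  unfolding monomial_def by (simp add: power_add prod.distrib)

lemma monomial_scale: "monomial N a (\<lambda>i. c * x i) = c ^ (\<Sum>i\<le>N. a i) * monomial N a x"
  unfolding monomial_def by (simp add: power_mult_distrib prod.distrib power_sum)

lemma peval_scale: "is_hpoly N d f \<Longrightarrow> peval N f (\<lambda>i. c * x i) = c ^ d * peval N f x"
  unfolding peval_eq_sum_monomial monomial_scale is_hpoly_def sum_distrib_left
  by (intro sum.cong) auto

definition polyfun :: "nat \<Rightarrow> ((nat \<Rightarrow> complex) \<Rightarrow> complex) \<Rightarrow> bool" where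
  "polyfun N P \<longleftrightarrow> (\<exists>f. finite {a. f a \<noteq> 0} \<and> (\<forall>a. f a \<noteq> 0 \<longrightarrow> (\<forall>i>N. a i = 0)) \<and> P = peval N f)"

lemma polyfun_peval: "is_hpoly N d f \<Longrightarrow> polyfun N (peval N f)"
  unfolding polyfun_def is_hpoly_def by blast

lemma polyfun_const: "polyfun N (\<lambda>x. c)"
proof -
  let ?f = "\<lambda>a::nat \<Rightarrow> nat. if a = (\<lambda>_. 0) then c else 0"
  have "peval N ?f x = c" for x
    by (subst peval_eq_sum_superset[of "{\<lambda>_. 0}"]) (auto simp: monomial_def)
  then show ?thesis unfolding polyfun_def
    by (intro exI[of _ ?f]) (auto intro: finite_subset[of _ "{\<lambda>_. 0}"])
qed

lemma polyfun_var:
  assumes "i \<le> N" shows "polyfun N (\<lambda>x. x i)"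
proof -
  define e where "e = (\<lambda>k::nat. if k = i then 1 else (0::nat))"
  let ?f = "\<lambda>a. if a = e then (1::complex) else 0"
  have "peval N ?f x = x i" for x
  proof -
    have "peval N ?f x = monomial N e x"
      by (subst peval_eq_sum_superset[of "{e}"]) auto
    also have "\<dots> = (\<Prod>k\<le>N. if k = i then x k else 1)"
      unfolding monomial_def e_def by (intro prod.cong) auto
    also have "\<dots> = x i" using assms by (subst prod.delta) auto
    finally show ?thesis .
  qed
  then show ?thesis unfolding polyfun_def using assms
    by (intro exI[of _ ?f]) (auto simp: e_def intro: finite_subset[of _ "{e}"])
qed

lemma polyfun_add:
  assumes "polyfun N P" "polyfun N Q" shows "polyfun N (\<lambda>x. P x + Q x)"
proof -
  obtain f where f: "finite {a. f a \<noteq> 0}" "\<forall>a. f a \<noteq> 0 \<longrightarrow> (\<forall>i>N. a i = 0)" "P = peval N f"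
    using assms(1) unfolding polyfun_def by blast
  obtain g where g: "finite {a. g a \<noteq> 0}" "\<forall>a. g a \<noteq> 0 \<longrightarrow> (\<forall>i>N. a i = 0)" "Q = peval N g"
    using assms(2) unfolding polyfun_def by blast
  let ?T = "{a. f a \<noteq> 0} \<union> {a. g a \<noteq> 0}"
  let ?h = "\<lambda>a. f a + g a"
  have supp: "{a. ?h a \<noteq> 0} \<subseteq> ?T" by auto
  have "peval N ?h x = P x + Q x" for x
    using f g supp by (simp add: peval_eq_sum_superset[of ?T] sum.distrib distrib_right)
  moreover have "finite {a. ?h a \<noteq> 0}" using f g supp finite_subset by blast
  moreover have "\<forall>a. ?h a \<noteq> 0 \<longrightarrow> (\<forall>i>N. a i = 0)"
    using f(2) g(2) by (metis add.right_neutral)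
  ultimately show ?thesis unfolding polyfun_def by (intro exI[of _ ?h]) auto
qed

lemma polyfun_mult:
  assumes "polyfun N P" "polyfun N Q" shows "polyfun N (\<lambda>x. P x * Q x)"
proof -
  obtain f where f: "finite {a. f a \<noteq> 0}" "\<forall>a. f a \<noteq> 0 \<longrightarrow> (\<forall>i>N. a i = 0)" "P = peval N f"
    using assms(1) unfolding polyfun_def by blast
  obtain g where g: "finite {a. g a \<noteq> 0}" "\<forall>a. g a \<noteq> 0 \<longrightarrow> (\<forall>i>N. a i = 0)" "Q = peval N g"
    using assms(2) unfolding polyfun_def by blast
  define S where "S = {a. f a \<noteq> 0} \<times> {a. g a \<noteq> 0}"
  define add where "add p = (\<lambda>i. fst p i + snd p i)" for p :: "(nat \<Rightarrow> nat) \<times> (nat \<Rightarrow> nat)"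
  define h where "h c = (\<Sum>p\<in>{p\<in>S. add p = c}. f (fst p) * g (snd p))" for c
  have finS: "finite S" using f g by (simp add: S_def)
  have supp: "{c. h c \<noteq> 0} \<subseteq> add ` S"
    unfolding h_def by (force elim: sum.not_neutral_contains_not_neutral)
  have "P x * Q x = peval N h x" for x
  proof -
    have "P x * Q x = (\<Sum>p\<in>S. f (fst p) * g (snd p) * monomial N (add p) x)"
      unfolding f(3) g(3) peval_eq_sum_monomial sum_product S_def sum.cartesian_product
        add_def monomial_add
      by (intro sum.cong) (auto simp: algebra_simps)
    also have "\<dots> = (\<Sum>c\<in>add ` S. \<Sum>p\<in>{p\<in>S. add p = c}. f (fst p) * g (snd p) * monomial N (add p) x)"
      by (rule sum.image_gen[OF finS])
    also have "\<dots> = (\<Sum>c\<in>add ` S. h c * monomial N c x)"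
      unfolding h_def sum_distrib_right by (intro sum.cong refl) auto
    also have "\<dots> = peval N h x" using peval_eq_sum_superset[OF _ supp] finS by simp
    finally show ?thesis .
  qed
  moreover have "finite {a. h a \<noteq> 0}" using supp finS finite_subset by blast
  moreover have "\<forall>c. h c \<noteq> 0 \<longrightarrow> (\<forall>i>N. c i = 0)"
    using supp f(2) g(2) by (fastforce simp: S_def add_def)
  ultimately show ?thesis unfolding polyfun_def by (intro exI[of _ h]) auto
qed

lemma polyfun_sum:
  "finite S \<Longrightarrow> (\<And>s. s \<in> S \<Longrightarrow> polyfun N (P s)) \<Longrightarrow> polyfun N (\<lambda>x. \<Sum>s\<in>S. P s x)"
  by (induction S rule: finite_induct) (auto intro: polyfun_add polyfun_const)

lemma polyfun_prod:
  "finite S \<Longrightarrow> (\<And>s. s \<in> S \<Longrightarrow> polyfun N (P s)) \<Longrightarrow> polyfun N (\<lambda>x. \<Prod>s\<in>S. P s x)"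
  by (induction S rule: finite_induct) (auto intro: polyfun_mult polyfun_const)

lemma polyfun_power: "polyfun N P \<Longrightarrow> polyfun N (\<lambda>x. P x ^ n)"
  by (induction n) (auto intro: polyfun_mult polyfun_const)

lemma polyfun_diff:
  assumes "polyfun N P" "polyfun N Q" shows "polyfun N (\<lambda>x. P x - Q x)"
proof -
  have "polyfun N (\<lambda>x. P x + (-1) * Q x)" using assms by (intro polyfun_add polyfun_mult polyfun_const)
  then show ?thesis by simp
qed

lemma polyfun_if: "polyfun N P \<Longrightarrow> polyfun N Q \<Longrightarrow> polyfun N (\<lambda>x. if b then P x else Q x)"
  by (cases b) auto

lemma polyfun_homogeneous_parts:
  assumes "polyfun N P"
  shows "\<exists>D g. finite D \<and> (\<forall>d. is_hpoly N d (g d)) \<and>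
    (\<forall>x c. P (\<lambda>i. c * x i) = (\<Sum>d\<in>D. c ^ d * peval N (g d) x))"
proof -
  obtain f where f: "finite {a. f a \<noteq> 0}" "\<forall>a. f a \<noteq> 0 \<longrightarrow> (\<forall>i>N. a i = 0)" "P = peval N f"
    using assms unfolding polyfun_def by blast
  define S where "S = {a. f a \<noteq> 0}"
  define deg where "deg a = (\<Sum>i\<le>N. a i)" for a :: "nat \<Rightarrow> nat"
  define g where "g d a = (if deg a = d then f a else 0)" for d a
  have "is_hpoly N d (g d)" for d
    unfolding is_hpoly_def g_def deg_def using f by (auto intro: finite_subset[OF _ f(1)])
  moreover have "P (\<lambda>i. c * x i) = (\<Sum>d\<in>deg ` S. c ^ d * peval N (g d) x)" for x c
  proof -
    have g_eq: "peval N (g d) x = (\<Sum>a\<in>{a\<in>S. deg a = d}. f a * monomial N a x)" for d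
      using f(1) by (subst peval_eq_sum_superset[of "{a\<in>S. deg a = d}"])
        (auto simp: S_def g_def intro!: sum.cong)
    have "P (\<lambda>i. c * x i) = (\<Sum>a\<in>S. f a * (c ^ deg a * monomial N a x))"
      unfolding f(3) peval_eq_sum_monomial monomial_scale S_def deg_def ..
    also have "\<dots> = (\<Sum>d\<in>deg ` S. \<Sum>a\<in>{a\<in>S. deg a = d}. f a * (c ^ deg a * monomial N a x))"
      using f(1) S_def by (intro sum.image_gen) auto
    also have "\<dots> = (\<Sum>d\<in>deg ` S. c ^ d * peval N (g d) x)"
      unfolding g_eq sum_distrib_left by (intro sum.cong refl) (auto simp: algebra_simps)
    finally show ?thesis .
  qed
  moreover have "finite (deg ` S)" using f(1) by (simp add: S_def)
  ultimately show ?thesis by blast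
qed

lemma sum_powers_vanish_imp_coeff_eq_0:
  fixes a :: "nat \<Rightarrow> 'a :: {idom, ring_char_0}"
  assumes "finite D" "\<And>c. c \<noteq> 0 \<Longrightarrow> (\<Sum>d\<in>D. c ^ d * a d) = 0" "d \<in> D"
  shows "a d = 0"
proof -
  define Q where "Q = (\<Sum>d\<in>D. monom (a d) d)"
  have "poly Q c = (\<Sum>d\<in>D. c ^ d * a d)" for c
    unfolding Q_def by (simp add: poly_sum poly_monom mult.commute)
  then have "UNIV - {0} \<subseteq> {c. poly Q c = 0}" using assms(2) by auto
  moreover have "infinite (UNIV - {0 :: 'a})" using infinite_UNIV_char_0 by simp
  ultimately have "Q = 0" using poly_roots_finite finite_subset by blast
  then have "coeff Q d = 0" by simp
  then show ?thesis unfolding Q_def coeff_sum coeff_monom using assms(1,3) by (simp add: sum.delta)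
qed

section \<open>Zariski closed sets\<close>

lemma Pvec_scale: "x \<in> Pvec N \<Longrightarrow> c \<noteq> 0 \<Longrightarrow> (\<lambda>i. c * x i) \<in> Pvec N"
  unfolding Pvec_def by auto

lemma coord_point_in_Pvec: "k \<le> N \<Longrightarrow> coord_point k \<in> Pvec N"
  unfolding Pvec_def coord_point_def by auto

lemma zclosed_subset_Pvec: "zclosed N S \<Longrightarrow> S \<subseteq> Pvec N"
  unfolding zclosed_def by auto

lemma zclosed_scale:
  assumes "zclosed N S" "x \<in> S" "c \<noteq> 0" shows "(\<lambda>i. c * x i) \<in> S"
proof -
  obtain F where F: "\<forall>(d, f)\<in>F. is_hpoly N d f" "S = {x \<in> Pvec N. \<forall>(d, f)\<in>F. peval N f x = 0}"
    using assms(1) unfolding zclosed_def by blast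
  have "peval N f (\<lambda>i. c * x i) = 0" if "(d, f) \<in> F" for d f
  proof -
    have "is_hpoly N d f" "peval N f x = 0" using F that assms(2) by auto
    then show ?thesis by (simp add: peval_scale)
  qed
  then show ?thesis using F(2) assms(2,3) Pvec_scale by auto
qed

text \<open>Since S is a cone, a polynomial vanishing on S vanishes there together with all its
  homogeneous parts.\<close>

lemma zclosed_if_polyfun_equations:
  assumes "S \<subseteq> Pvec N"
    and cone: "\<And>x c. x \<in> S \<Longrightarrow> c \<noteq> 0 \<Longrightarrow> (\<lambda>i. c * x i) \<in> S"
    and "\<And>P. P \<in> Ps \<Longrightarrow> polyfun N P"
    and S_eq: "\<And>x. x \<in> Pvec N \<Longrightarrow> x \<in> S \<longleftrightarrow> (\<forall>P\<in>Ps. P x = 0)"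
  shows "zclosed N S"
proof -
  have "\<forall>P\<in>Ps. \<exists>D g. finite D \<and> (\<forall>d. is_hpoly N d (g d)) \<and>
      (\<forall>x c. P (\<lambda>i. c * x i) = (\<Sum>d\<in>D. c ^ d * peval N (g d) x))"
    using assms(3) polyfun_homogeneous_parts by blast
  then obtain D g where Dg: "\<And>P. P \<in> Ps \<Longrightarrow> finite (D P)" "\<And>P d. P \<in> Ps \<Longrightarrow> is_hpoly N d (g P d)"
    "\<And>P x c. P \<in> Ps \<Longrightarrow> P (\<lambda>i. c * x i) = (\<Sum>d\<in>D P. c ^ d * peval N (g P d) x)"
    by metis
  define F where "F = {(d, g P d) | P d. P \<in> Ps \<and> d \<in> D P}"
  have "S = {x \<in> Pvec N. \<forall>(d, f)\<in>F. peval N f x = 0}"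
  proof (intro equalityI subsetI)
    fix x assume x: "x \<in> S"
    have "peval N (g P d) x = 0" if "P \<in> Ps" "d \<in> D P" for P d
    proof (rule sum_powers_vanish_imp_coeff_eq_0[OF Dg(1)[OF \<open>P \<in> Ps\<close>] _ \<open>d \<in> D P\<close>])
      fix c :: complex assume "c \<noteq> 0"
      then have "P (\<lambda>i. c * x i) = 0" using cone x S_eq \<open>P \<in> Ps\<close> assms(1) by blast
      then show "(\<Sum>d\<in>D P. c ^ d * peval N (g P d) x) = 0" using Dg(3) \<open>P \<in> Ps\<close> by metis
    qed
    then show "x \<in> {x \<in> Pvec N. \<forall>(d, f)\<in>F. peval N f x = 0}" using x assms(1) by (auto simp: F_def)
  next
    fix x assume x: "x \<in> {x \<in> Pvec N. \<forall>(d, f)\<in>F. peval N f x = 0}"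
    have "P x = 0" if "P \<in> Ps" for P
    proof -
      have "P (\<lambda>i. 1 * x i) = (\<Sum>d\<in>D P. 1 ^ d * peval N (g P d) x)" using Dg(3) that by blast
      also have "\<dots> = 0" using x that by (intro sum.neutral) (auto simp: F_def)
      finally show ?thesis by simp
    qed
    then show "x \<in> S" using S_eq x by blast
  qed
  moreover have "\<forall>(d, f)\<in>F. is_hpoly N d f" using Dg(2) by (auto simp: F_def)
  ultimately show ?thesis unfolding zclosed_def by blast
qed

lemma zclosed_Int_zero_set:
  assumes S: "zclosed N S" and "polyfun N P" and hom: "\<And>x c. P (\<lambda>i. c * x i) = c ^ d * P x"
  shows "zclosed N {x \<in> S. P x = 0}"
proof -
  obtain F where F: "\<forall>(d, f)\<in>F. is_hpoly N d f" "S = {x \<in> Pvec N. \<forall>(d, f)\<in>F. peval N f x = 0}"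
    using S unfolding zclosed_def by blast
  show ?thesis
  proof (rule zclosed_if_polyfun_equations[where Ps = "insert P ((\<lambda>(d, f). peval N f) ` F)"])
    show "{x \<in> S. P x = 0} \<subseteq> Pvec N" using zclosed_subset_Pvec[OF S] by blast
    show "(\<lambda>i. c * x i) \<in> {x \<in> S. P x = 0}" if "x \<in> {x \<in> S. P x = 0}" "c \<noteq> 0" for x c
      using that zclosed_scale[OF S] hom by simp
    show "polyfun N Q" if "Q \<in> insert P ((\<lambda>(d, f). peval N f) ` F)" for Q
      using that \<open>polyfun N P\<close> F(1) polyfun_peval by auto
    show "x \<in> {x \<in> S. P x = 0} \<longleftrightarrow> (\<forall>Q\<in>insert P ((\<lambda>(d, f). peval N f) ` F). Q x = 0)"
      if "x \<in> Pvec N" for x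
      using that F(2) by auto
  qed
qed

section \<open>Polynomials in one coordinate\<close>

definition coord_poly :: "nat \<Rightarrow> nat \<Rightarrow> ((nat \<Rightarrow> nat) \<Rightarrow> complex) \<Rightarrow> (nat \<Rightarrow> complex) \<Rightarrow> complex poly" where
  "coord_poly N l f q = (\<Sum>a\<in>{a. f a \<noteq> 0}. monom (f a * (\<Prod>i\<in>{..N}-{l}. q i ^ a i)) (a l))"

lemma poly_coord_poly:
  assumes "l \<le> N" shows "poly (coord_poly N l f q) s = peval N f (q(l := s))"
proof -
  have "(\<Prod>i\<le>N. (q(l := s)) i ^ a i) = s ^ a l * (\<Prod>i\<in>{..N}-{l}. q i ^ a i)" for a
    using assms by (subst prod.remove[of _ l]) (auto intro!: prod.cong)
  then show ?thesis unfolding coord_poly_def peval_def poly_sum poly_monom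
    by (intro sum.cong) (auto simp: algebra_simps)
qed

lemma coeff_coord_poly:
  "coeff (coord_poly N l f q) k =
    (\<Sum>a\<in>{a. f a \<noteq> 0}. (if a l = k then f a else 0) * (\<Prod>i\<in>{..N}-{l}. q i ^ a i))"
  unfolding coord_poly_def coeff_sum coeff_monom by (intro sum.cong) auto

lemma polyfun_coeff_coord_poly:
  "finite {a. f a \<noteq> 0} \<Longrightarrow> polyfun N (\<lambda>q. coeff (coord_poly N l f q) k)"
  unfolding coeff_coord_poly
  by (intro polyfun_sum polyfun_mult polyfun_const polyfun_prod polyfun_power polyfun_var) auto

lemma degree_coord_poly_le:
  assumes "is_hpoly N d f" "l \<le> N" shows "degree (coord_poly N l f q) \<le> d"
  unfolding coord_poly_def
proof (rule degree_sum_le)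
  show "finite {a. f a \<noteq> 0}" using assms unfolding is_hpoly_def by blast
next
  fix a assume "a \<in> {a. f a \<noteq> 0}"
  then have "(\<Sum>i\<le>N. a i) = d" using assms unfolding is_hpoly_def by blast
  moreover have "a l \<le> (\<Sum>i\<le>N. a i)" using assms(2) by (intro member_le_sum) auto
  ultimately show "degree (monom (f a * (\<Prod>i\<in>{..N}-{l}. q i ^ a i)) (a l)) \<le> d"
    by (meson degree_monom_le le_trans)
qed

lemma is_hpoly_exponent_eq_degree_iff:
  assumes "is_hpoly N d f" "f a \<noteq> 0" "l \<le> N"
  shows "a l = d \<longleftrightarrow> (\<forall>i\<in>{..N}-{l}. a i = 0)"
proof -
  have "d = (\<Sum>i\<le>N. a i)" using assms(1,2) unfolding is_hpoly_def by auto
  also have "\<dots> = a l + (\<Sum>i\<in>{..N}-{l}. a i)" using assms(3) by (subst sum.remove[of _ l]) auto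
  finally show ?thesis by auto
qed

lemma coeff_coord_poly_degree:
  assumes f: "is_hpoly N d f" and l: "l \<le> N"
  shows "coeff (coord_poly N l f q) d = peval N f (coord_point l)"
proof -
  let ?top = "\<lambda>a. \<forall>i\<in>{..N}-{l}. a i = 0"
  have "(\<Prod>i\<le>N. coord_point l i ^ a i) = (\<Prod>i\<in>{..N}-{l}. (0::complex) ^ a i)" for a
    using l by (subst prod.remove[of _ l]) (auto simp: coord_point_def intro!: prod.cong)
  then have "(\<Prod>i\<le>N. coord_point l i ^ a i) = (if ?top a then 1 else 0)" for a
    by (auto simp: power_0_left prod_zero_iff)
  then have "peval N f (coord_point l) = (\<Sum>a\<in>{a. f a \<noteq> 0}. if ?top a then f a else 0)"
    unfolding peval_def by (intro sum.cong) auto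
  also have "\<dots> = coeff (coord_poly N l f q) d"
    unfolding coeff_coord_poly using is_hpoly_exponent_eq_degree_iff[OF f _ l]
    by (intro sum.cong) auto
  finally show ?thesis ..
qed

lemma coord_poly_degree_eq:
  assumes "is_hpoly N d f" "l \<le> N" "peval N f (coord_point l) \<noteq> 0"
  shows "degree (coord_poly N l f q) = d" and "coord_poly N l f q \<noteq> 0"
proof -
  have lc: "coeff (coord_poly N l f q) d \<noteq> 0"
    using assms by (simp add: coeff_coord_poly_degree)
  then show "coord_poly N l f q \<noteq> 0" by auto
  show "degree (coord_poly N l f q) = d"
    using degree_coord_poly_le[OF assms(1,2), of q] le_degree[OF lc] by (rule antisym)
qed

section \<open>Elimination\<close>

lemma polyfun_det:
  assumes "\<And>i j. i < n \<Longrightarrow> j < n \<Longrightarrow> polyfun N (\<lambda>q. M q $$ (i, j))"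
    and "\<And>q. M q \<in> carrier_mat n n"
  shows "polyfun N (\<lambda>q. det (M q))"
proof -
  have "det (M q) = (\<Sum>p\<in>{p. p permutes {0..<n}}. of_int (sign p) * (\<Prod>i\<in>{0..<n}. M q $$ (i, p i)))"
    for q using assms(2)[of q] by (simp add: det_def)
  moreover have "polyfun N (\<lambda>q. \<Sum>p\<in>{p. p permutes {0..<n}}. of_int (sign p) * (\<Prod>i\<in>{0..<n}. M q $$ (i, p i)))"
  proof (intro polyfun_sum polyfun_mult polyfun_const polyfun_prod)
    show "finite {p. p permutes {0..<n}}" by (rule finite_permutations) simp
    fix p i assume "p \<in> {p. p permutes {0..<n}}" "i \<in> {0..<n}"
    then have "i < n" "p i < n" using permutes_in_image by fastforce+
    then show "polyfun N (\<lambda>q. M q $$ (i, p i))" using assms(1) by blast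
  qed simp
  ultimately show ?thesis by simp
qed

lemma polyfun_resultant:
  assumes "\<And>k. polyfun N (\<lambda>q. coeff (A q) k)" "\<And>k. polyfun N (\<lambda>q. coeff (B q) k)"
    and "\<And>q. degree (A q) = m" "\<And>q. degree (B q) = n"
  shows "polyfun N (\<lambda>q. resultant (A q) (B q))"
proof -
  have "resultant (A q) (B q) = det (sylvester_mat_sub m n (A q) (B q))" for q
    by (simp add: resultant_def sylvester_mat_def assms(3,4))
  moreover have "polyfun N (\<lambda>q. det (sylvester_mat_sub m n (A q) (B q)))"
  proof (rule polyfun_det)
    fix i j assume ij: "i < m + n" "j < m + n"
    have "polyfun N (\<lambda>q. if i < n then if i \<le> j \<and> j - i \<le> m then coeff (A q) (m + i - j) else 0
          else if i - n \<le> j \<and> j \<le> i then coeff (B q) (i - j) else 0)"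
      by (intro polyfun_if polyfun_const assms(1,2))
    then show "polyfun N (\<lambda>q. sylvester_mat_sub m n (A q) (B q) $$ (i, j))"
      using ij by (simp only: sylvester_mat_sub_index)
  qed (rule sylvester_mat_sub_carrier)
  ultimately show ?thesis by simp
qed

lemma degree_add_monom_mult:
  fixes h p :: "'a :: idom poly"
  assumes "degree h < e" "p \<noteq> 0"
  shows "degree (h + monom 1 e * p) = e + degree p"
proof -
  have "degree (monom 1 e * p) = e + degree p"
    using assms(2) by (simp add: degree_mult_eq degree_monom_eq)
  then show ?thesis using assms(1) by (subst degree_add_eq_right) auto
qed

lemma polyfun_resultant_combination:
  fixes n :: nat
  assumes P: "\<And>k. polyfun N (\<lambda>q. coeff (P q) k)" "\<And>q. degree (P q) = d" "\<And>q. P q \<noteq> 0"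
    and H: "\<And>j k. j < n \<Longrightarrow> polyfun N (\<lambda>q. coeff (H j q) k)" "\<And>j q. j < n \<Longrightarrow> degree (H j q) \<le> e"
  shows "polyfun N (\<lambda>q. resultant (P q) ((\<Sum>j<n. smult (U j) (H j q)) + monom 1 (Suc e) * P q))"
proof (rule polyfun_resultant[OF P(1)])
  show "degree (P q) = d" for q by (rule P(2))
  have "degree (\<Sum>j<n. smult (U j) (H j q)) \<le> e" for q
    by (intro degree_sum_le order.trans[OF degree_smult_le] H(2)) auto
  then show "degree ((\<Sum>j<n. smult (U j) (H j q)) + monom 1 (Suc e) * P q) = Suc e + d" for q
    using degree_add_monom_mult[OF le_imp_less_Suc P(3)] P(2) by simp
  show "polyfun N (\<lambda>q. coeff ((\<Sum>j<n. smult (U j) (H j q)) + monom 1 (Suc e) * P q) k)" for k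
    unfolding coeff_add coeff_sum coeff_smult coeff_monom_mult
    by (intro polyfun_add polyfun_sum polyfun_mult polyfun_const polyfun_if H P) auto
qed

lemma resultant_eq_0_iff_common_root:
  fixes p h :: "complex poly"
  assumes "p \<noteq> 0"
  shows "resultant p h = 0 \<longleftrightarrow> (\<exists>s. poly p s = 0 \<and> poly h s = 0)"
proof
  assume "resultant p h = 0"
  then have "\<not> constant (poly (gcd p h))" by (simp add: resultant_0_gcd constant_degree)
  then obtain s where s: "poly (gcd p h) s = 0" using fundamental_theorem_of_algebra by blast
  then show "\<exists>s. poly p s = 0 \<and> poly h s = 0"
    by (metis poly_eq_0_iff_dvd dvd_trans gcd_dvd1 gcd_dvd2)
next
  assume "\<exists>s. poly p s = 0 \<and> poly h s = 0"
  then obtain s where "[:-s, 1:] dvd gcd p h" by (auto simp: poly_eq_0_iff_dvd)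
  then have "degree [:-s, 1:] \<le> degree (gcd p h)" using assms by (intro dvd_imp_degree_le) auto
  then show "resultant p h = 0" by (simp add: resultant_0_gcd)
qed

text \<open>If there were no common zero, choose for each z \<in> Z a member not vanishing at z and combine
  these with coefficients t ^ k, for a t avoiding the roots of finitely many nonzero polynomials.\<close>

lemma common_zero_iff_combinations:
  fixes h :: "'a \<Rightarrow> 'b \<Rightarrow> 'c :: {idom, ring_char_0}"
  assumes "finite Z"
  shows "(\<exists>z\<in>Z. \<forall>a\<in>A. h a z = 0) \<longleftrightarrow>
    (\<forall>(n::nat) G U. (\<forall>k<n. G k \<in> A) \<longrightarrow> (\<exists>z\<in>Z. (\<Sum>k<n. U k * h (G k) z) = 0))"
proof (intro iffI allI impI)
  fix n G U assume "\<exists>z\<in>Z. \<forall>a\<in>A. h a z = 0" "\<forall>k<n. G k \<in> A"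
  then obtain z where "z \<in> Z" "\<forall>k<n. h (G k) z = 0" by blast
  moreover from this(2) have "(\<Sum>k<n. U k * h (G k) z) = 0" by (intro sum.neutral) simp
  ultimately show "\<exists>z\<in>Z. (\<Sum>k<n. U k * h (G k) z) = 0" by blast
next
  assume comb: "\<forall>(n::nat) G U. (\<forall>k<n. G k \<in> A) \<longrightarrow> (\<exists>z\<in>Z. (\<Sum>k<n. U k * h (G k) z) = 0)"
  show "\<exists>z\<in>Z. \<forall>a\<in>A. h a z = 0"
  proof (rule ccontr)
    assume "\<not> ?thesis"
    then obtain g where g: "\<And>z. z \<in> Z \<Longrightarrow> g z \<in> A \<and> h (g z) z \<noteq> 0"
      by (metis (no_types))
    obtain zs where zs: "set zs = Z" using finite_list[OF assms] by blast
    define G where "G k = g (zs ! k)" for k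
    define Q where "Q z = (\<Sum>k<length zs. monom (h (G k) z) k)" for z
    have poly_Q: "poly (Q z) t = (\<Sum>k<length zs. t ^ k * h (G k) z)" for z t
      by (simp add: Q_def poly_sum poly_monom mult.commute)
    have "Q z \<noteq> 0" if z: "z \<in> Z" for z
    proof -
      obtain k0 where k0: "k0 < length zs" "zs ! k0 = z" using z zs by (auto simp: in_set_conv_nth)
      have "coeff (Q z) k0 = h (G k0) z"
        unfolding Q_def coeff_sum coeff_monom using k0(1) by simp
      then show ?thesis using g[OF z] k0(2) by (auto simp: G_def)
    qed
    then have "finite (\<Union>z\<in>Z. {t. poly (Q z) t = 0})"
      using assms by (auto intro: poly_roots_finite)
    then obtain t where t: "t \<notin> (\<Union>z\<in>Z. {t. poly (Q z) t = 0})"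
      using ex_new_if_finite[OF infinite_UNIV_char_0] by blast
    have "\<forall>k<length zs. G k \<in> A"
      unfolding G_def using g nth_mem zs by blast
    then obtain z where "z \<in> Z" "(\<Sum>k<length zs. t ^ k * h (G k) z) = 0"
      using comb[rule_format, of "length zs" G "\<lambda>k. t ^ k"] by blast
    then show False using t by (simp add: poly_Q)
  qed
qed

text \<open>Adding monom 1 (Suc e) * P does not change the common roots with P, but it makes the degree,
  hence the shape of the Sylvester matrix, independent of q.\<close>

definition elim_resultant :: "nat \<Rightarrow> nat \<Rightarrow> ((nat \<Rightarrow> nat) \<Rightarrow> complex) \<Rightarrow> nat \<Rightarrow>
    (nat \<Rightarrow> nat \<times> ((nat \<Rightarrow> nat) \<Rightarrow> complex)) \<Rightarrow> (nat \<Rightarrow> complex) \<Rightarrow> (nat \<Rightarrow> complex) \<Rightarrow> complex" where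
  "elim_resultant N l f0 n G U q = resultant (coord_poly N l f0 q)
    ((\<Sum>k<n. smult (U k) (coord_poly N l (snd (G k)) q)) + monom 1 (Suc (\<Sum>k<n. fst (G k))) * coord_poly N l f0 q)"

lemma polyfun_elim_resultant:
  assumes f0: "is_hpoly N d0 f0" "l \<le> N" "peval N f0 (coord_point l) \<noteq> 0"
    and G: "\<And>k. k < n \<Longrightarrow> is_hpoly N (fst (G k)) (snd (G k))"
  shows "polyfun N (elim_resultant N l f0 n G U)"
  unfolding elim_resultant_def
proof (rule polyfun_resultant_combination)
  show "polyfun N (\<lambda>q. coeff (coord_poly N l f0 q) k)" for k
    using f0(1) by (intro polyfun_coeff_coord_poly) (simp add: is_hpoly_def)
  show "degree (coord_poly N l f0 q) = d0" "coord_poly N l f0 q \<noteq> 0" for q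
    using coord_poly_degree_eq[OF f0] by blast+
  show "polyfun N (\<lambda>q. coeff (coord_poly N l (snd (G j)) q) k)" if "j < n" for j k
    using G[OF that] by (intro polyfun_coeff_coord_poly) (simp add: is_hpoly_def)
  show "degree (coord_poly N l (snd (G j)) q) \<le> (\<Sum>k<n. fst (G k))" if "j < n" for j q
  proof -
    have "fst (G j) \<le> (\<Sum>k<n. fst (G k))" using that by (intro member_le_sum) auto
    with degree_coord_poly_le[OF G[OF that] f0(2)] show ?thesis by (rule order.trans)
  qed
qed

lemma elim_resultant_eq_0_iff:
  assumes "is_hpoly N d0 f0" "l \<le> N" "peval N f0 (coord_point l) \<noteq> 0"
  shows "elim_resultant N l f0 n G U q = 0 \<longleftrightarrow> (\<exists>s. poly (coord_poly N l f0 q) s = 0 \<and>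
    poly (\<Sum>k<n. smult (U k) (coord_poly N l (snd (G k)) q)) s = 0)"
  unfolding elim_resultant_def resultant_eq_0_iff_common_root[OF coord_poly_degree_eq(2)[OF assms]]
  by auto

lemma coord_extension_iff_elim_resultants:
  assumes Y_eq: "Y = {x \<in> Pvec N. \<forall>(d, f)\<in>F. peval N f x = 0}" and l: "l \<le> N"
    and f0: "(d0, f0) \<in> F" "is_hpoly N d0 f0" "peval N f0 (coord_point l) \<noteq> 0"
    and q: "q \<in> Pvec N" "q l = 0"
  shows "(\<exists>s. q(l := s) \<in> Y) \<longleftrightarrow>
    (\<forall>(n::nat) G U. (\<forall>k<n. G k \<in> F) \<longrightarrow> elim_resultant N l f0 n G U q = 0)"
proof -
  let ?Z = "{s. poly (coord_poly N l f0 q) s = 0}"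
  let ?h = "\<lambda>a s. poly (coord_poly N l (snd a) q) s"
  have "q(l := s) \<in> Pvec N" for s
  proof -
    obtain i where "i \<le> N" "q i \<noteq> 0" using q(1) unfolding Pvec_def by blast
    moreover have "i \<noteq> l" using calculation q(2) by auto
    ultimately show ?thesis using q(1) l unfolding Pvec_def by auto
  qed
  then have mem: "q(l := s) \<in> Y \<longleftrightarrow> (\<forall>a\<in>F. ?h a s = 0)" for s
    unfolding Y_eq poly_coord_poly[OF l] by (simp add: case_prod_beta)
  have "(\<exists>s. q(l := s) \<in> Y) \<longleftrightarrow> (\<exists>s\<in>?Z. \<forall>a\<in>F. ?h a s = 0)"
  proof
    assume "\<exists>s. q(l := s) \<in> Y"
    then obtain s where s: "\<forall>a\<in>F. ?h a s = 0" using mem by blast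
    then have "s \<in> ?Z" using f0(1) by force
    with s show "\<exists>s\<in>?Z. \<forall>a\<in>F. ?h a s = 0" by blast
  qed (use mem in blast)
  moreover have "(\<exists>s\<in>?Z. \<forall>a\<in>F. ?h a s = 0) \<longleftrightarrow>
      (\<forall>(n::nat) G U. (\<forall>k<n. G k \<in> F) \<longrightarrow> (\<exists>s\<in>?Z. (\<Sum>k<n. U k * ?h (G k) s) = 0))"
    using poly_roots_finite[OF coord_poly_degree_eq(2)[OF f0(2) l f0(3)]]
    by (rule common_zero_iff_combinations)
  ultimately show ?thesis by (simp add: poly_sum elim_resultant_eq_0_iff[OF f0(2) l f0(3)])
qed

lemma image_fun_upd_zero_iff:
  "q \<in> (\<lambda>x. x(l := 0)) ` Y \<longleftrightarrow> q l = 0 \<and> (\<exists>s. q(l := s) \<in> Y)"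
proof
  assume "q \<in> (\<lambda>x. x(l := 0)) ` Y"
  then obtain x where "x \<in> Y" "q = x(l := 0)" by blast
  then have "q l = 0" "q(l := x l) \<in> Y" by simp_all
  then show "q l = 0 \<and> (\<exists>s. q(l := s) \<in> Y)" by blast
next
  assume "q l = 0 \<and> (\<exists>s. q(l := s) \<in> Y)"
  then obtain s where "q l = 0" "q(l := s) \<in> Y" by blast
  moreover have "q = (q(l := s))(l := 0)" using \<open>q l = 0\<close> by auto
  ultimately show "q \<in> (\<lambda>x. x(l := 0)) ` Y" by (metis image_eqI)
qed

lemma image_clear_coord_subset_Pvec:
  assumes "Y \<subseteq> Pvec N" "\<And>x. x \<in> Y \<Longrightarrow> \<exists>i\<le>N. i \<noteq> l \<and> x i \<noteq> 0"
  shows "(\<lambda>x. x(l := 0)) ` Y \<subseteq> Pvec N"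
proof
  fix y assume "y \<in> (\<lambda>x. x(l := 0)) ` Y"
  then obtain x where x: "x \<in> Y" "y = x(l := 0)" by blast
  then obtain i where "i \<le> N" "i \<noteq> l" "x i \<noteq> 0" using assms(2) by blast
  then show "y \<in> Pvec N" using x assms(1) unfolding Pvec_def by auto
qed

lemma image_clear_coord_scale:
  assumes "zclosed N Y" "y \<in> (\<lambda>x. x(l := 0)) ` Y" "c \<noteq> 0"
  shows "(\<lambda>i. c * y i) \<in> (\<lambda>x. x(l := 0)) ` Y"
proof -
  obtain x where "x \<in> Y" "y = x(l := 0)" using assms(2) by blast
  then have "(\<lambda>i. c * x i) \<in> Y" "(\<lambda>i. c * y i) = (\<lambda>i. c * x i)(l := 0)"
    using zclosed_scale[OF assms(1) _ assms(3)] by auto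
  then show ?thesis by blast
qed

text \<open>Projection from the coordinate point e_l, which is not on Y: some equation f0 of Y does
  not vanish at e_l, so as a polynomial in the l-th coordinate it has constant degree and
  leading coefficient.\<close>

lemma zclosed_image_clear_coord:
  assumes Y: "zclosed N Y" and l: "l \<le> N"
    and nz: "\<And>x. x \<in> Y \<Longrightarrow> \<exists>i\<le>N. i \<noteq> l \<and> x i \<noteq> 0"
  shows "zclosed N ((\<lambda>x. x(l := 0)) ` Y)"
proof -
  obtain F where hp: "\<forall>(d, f)\<in>F. is_hpoly N d f" and Y_eq: "Y = {x \<in> Pvec N. \<forall>(d, f)\<in>F. peval N f x = 0}"
    using Y unfolding zclosed_def by blast
  have "coord_point l \<notin> Y"
  proof
    assume "coord_point l \<in> Y"
    then obtain i where "i \<noteq> l" "coord_point l i \<noteq> 0" using nz by blast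
    then show False by (simp add: coord_point_def)
  qed
  then obtain d0 f0 where f0: "(d0, f0) \<in> F" "peval N f0 (coord_point l) \<noteq> 0"
    using Y_eq coord_point_in_Pvec[OF l] by auto
  have hp0: "is_hpoly N d0 f0" using hp f0(1) by auto
  define Ps where "Ps = insert (\<lambda>q. q l) {elim_resultant N l f0 n G U | n G U. \<forall>k<n. G k \<in> F}"
  show ?thesis
  proof (rule zclosed_if_polyfun_equations[where Ps = Ps])
    show "(\<lambda>x. x(l := 0)) ` Y \<subseteq> Pvec N"
      using zclosed_subset_Pvec[OF Y] nz by (rule image_clear_coord_subset_Pvec)
    show "(\<lambda>i. c * y i) \<in> (\<lambda>x. x(l := 0)) ` Y" if "y \<in> (\<lambda>x. x(l := 0)) ` Y" "c \<noteq> 0" for y c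
      using Y that by (rule image_clear_coord_scale)
    show "polyfun N Q" if "Q \<in> Ps" for Q
    proof -
      have "is_hpoly N (fst (G k)) (snd (G k))" if "G k \<in> F" for G and k :: nat
        using hp that by (cases "G k") auto
      then show ?thesis using \<open>Q \<in> Ps\<close> polyfun_var[OF l] polyfun_elim_resultant[OF hp0 l f0(2)]
        unfolding Ps_def by blast
    qed
    show "q \<in> (\<lambda>x. x(l := 0)) ` Y \<longleftrightarrow> (\<forall>Q\<in>Ps. Q q = 0)" if "q \<in> Pvec N" for q
    proof -
      have "q \<in> (\<lambda>x. x(l := 0)) ` Y \<longleftrightarrow> q l = 0 \<and> (\<exists>s. q(l := s) \<in> Y)"
        by (rule image_fun_upd_zero_iff)
      also have "\<dots> \<longleftrightarrow> q l = 0 \<and>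
          (\<forall>n G U. (\<forall>k<n. G k \<in> F) \<longrightarrow> elim_resultant N l f0 n G U q = 0)"
        by (intro conj_cong refl coord_extension_iff_elim_resultants[OF Y_eq l f0(1) hp0 f0(2) that])
      also have "\<dots> \<longleftrightarrow> (\<forall>Q\<in>Ps. Q q = 0)"
        unfolding Ps_def by auto
      finally show ?thesis .
    qed
  qed
qed

section \<open>Curves avoiding Delta\<close>

definition clear_coords :: "nat set \<Rightarrow> (nat \<Rightarrow> complex) \<Rightarrow> nat \<Rightarrow> complex" where
  "clear_coords R x = (\<lambda>i. if i \<in> R then 0 else x i)"

lemma zero_coord_unique:
  assumes "x \<in> Pvec N" "x \<notin> Delta N" "i \<le> N" "j \<le> N" "x i = 0" "x j = 0"
  shows "i = j"
  using assms unfolding Delta_def by blast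

lemma card_zero_coords_le_1:
  assumes "x \<in> Pvec N" "x \<notin> Delta N"
  shows "card {i. i \<le> N \<and> x i = 0} \<le> 1"
  using zero_coord_unique[OF assms] by (auto simp: card_le_Suc0_iff_eq)

text \<open>Since a point of C has at most one vanishing coordinate, clearing fewer than N coordinates
  never reaches the centre of the next projection.\<close>

lemma zclosed_image_clear_coords:
  assumes C: "zclosed N C" "C \<inter> Delta N = {}"
  shows "R \<subseteq> {..N} \<Longrightarrow> card R < N \<Longrightarrow> zclosed N (clear_coords R ` C)"
proof (induction R rule: infinite_finite_induct)
  case empty
  have "clear_coords {} ` C = C" by (auto simp: clear_coords_def)
  then show ?case using C by simp
next
  case (insert l R)
  have l: "l \<le> N" using insert by auto
  have "clear_coords (insert l R) x = (clear_coords R x)(l := 0)" for x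
    by (auto simp: clear_coords_def)
  then have "clear_coords (insert l R) ` C = (\<lambda>y. y(l := 0)) ` clear_coords R ` C"
    by (simp add: image_image)
  moreover have "\<exists>i\<le>N. i \<noteq> l \<and> y i \<noteq> 0" if y: "y \<in> clear_coords R ` C" for y
  proof (rule ccontr)
    assume zero: "\<not> (\<exists>i\<le>N. i \<noteq> l \<and> y i \<noteq> 0)"
    obtain x where x: "x \<in> C" "y = clear_coords R x" using y by blast
    have "x \<in> Pvec N" "x \<notin> Delta N" using x(1) C zclosed_subset_Pvec by auto
    have "card ({..N} - insert l R) \<le> card {i. i \<le> N \<and> x i = 0}"
      using zero x(2) by (intro card_mono) (auto simp: clear_coords_def)
    also have "\<dots> \<le> 1" by (rule card_zero_coords_le_1) fact+
    finally have "card ({..N} - insert l R) \<le> 1" .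
    moreover have "card ({..N} - insert l R) = Suc N - card (insert l R)"
      using insert.hyps(1) insert.prems(1) by (subst card_Diff_subset) auto
    ultimately show False using insert by simp
  qed
  ultimately show ?case using zclosed_image_clear_coord[OF _ l] insert by simp
qed (meson finite_atMost finite_subset)

lemma finite_coord_ratios:
  assumes C: "zclosed N C" "C \<inter> Delta N = {}"
    and ij: "i \<le> N" "j \<le> N" "i \<noteq> j"
    and nz: "\<And>x. x \<in> C \<Longrightarrow> x j \<noteq> 0"
  shows "finite ((\<lambda>x. x i / x j) ` C)"
proof -
  define R where "R = {..N} - {i, j}"
  have "card R = Suc N - 2" using ij unfolding R_def by (subst card_Diff_subset) auto
  then have "zclosed N (clear_coords R ` C)"
    using zclosed_image_clear_coords[OF C] ij by (simp add: R_def)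
  then obtain F where hp: "\<forall>(d, f)\<in>F. is_hpoly N d f"
    and Y_eq: "clear_coords R ` C = {x \<in> Pvec N. \<forall>(d, f)\<in>F. peval N f x = 0}"
    unfolding zclosed_def by blast
  have "coord_point i \<notin> clear_coords R ` C"
  proof
    assume "coord_point i \<in> clear_coords R ` C"
    then obtain x where "x \<in> C" "coord_point i = clear_coords R x" by blast
    then have "x \<in> C" "coord_point i j = clear_coords R x j" by simp_all
    then show False using nz ij(3) by (simp add: clear_coords_def coord_point_def R_def)
  qed
  then obtain d f where df: "(d, f) \<in> F" "peval N f (coord_point i) \<noteq> 0"
    using Y_eq coord_point_in_Pvec[OF ij(1)] by auto
  have hf: "is_hpoly N d f" using hp df(1) by auto
  let ?Q = "coord_poly N i f (coord_point j)"
  have "?Q \<noteq> 0" using coeff_coord_poly_degree[OF hf ij(1)] df(2) by (metis coeff_0)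
  have "(\<lambda>x. x i / x j) ` C \<subseteq> {r. poly ?Q r = 0}"
  proof
    fix r assume "r \<in> (\<lambda>x. x i / x j) ` C"
    then obtain x where x: "x \<in> C" "r = x i / x j" by blast
    have "x \<in> Pvec N" using x(1) zclosed_subset_Pvec[OF C(1)] by blast
    define w where "w = (coord_point j)(i := r)"
    have "clear_coords R x = (\<lambda>k. x j * w k)"
    proof
      fix k
      show "clear_coords R x k = x j * w k"
        using \<open>x \<in> Pvec N\<close> x nz[OF x(1)] ij
        by (cases "k \<le> N") (auto simp: clear_coords_def coord_point_def R_def Pvec_def w_def)
    qed
    moreover have "peval N f (clear_coords R x) = 0" using Y_eq x(1) df(1) by blast
    ultimately have "x j ^ d * peval N f w = 0" by (simp add: peval_scale[OF hf])
    then have "peval N f w = 0" using nz[OF x(1)] by simp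
    then show "r \<in> {r. poly ?Q r = 0}" by (simp add: poly_coord_poly[OF ij(1)] w_def)
  qed
  then show ?thesis using poly_roots_finite[OF \<open>?Q \<noteq> 0\<close>] finite_subset by blast
qed

lemma zclosed_coord_ratio_in:
  assumes "zclosed N C" "i \<le> N" "j \<le> N" "finite W"
  shows "zclosed N {x \<in> C. (\<Prod>w\<in>W. x i - w * x j) = 0}"
proof (rule zclosed_Int_zero_set[OF assms(1)])
  show "polyfun N (\<lambda>x. \<Prod>w\<in>W. x i - w * x j)"
    using assms by (intro polyfun_prod polyfun_diff polyfun_mult polyfun_var polyfun_const)
  show "(\<Prod>w\<in>W. c * x i - w * (c * x j)) = c ^ card W * (\<Prod>w\<in>W. x i - w * x j)" for c x
  proof -
    have "(\<Prod>w\<in>W. c * x i - w * (c * x j)) = (\<Prod>w\<in>W. c * (x i - w * x j))"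
      by (simp add: algebra_simps)
    then show ?thesis by (simp add: prod.distrib)
  qed
qed

lemma zirred_coord_ratio_const:
  assumes C: "zirred N C" and ij: "i \<le> N" "j \<le> N"
    and nz: "\<And>x. x \<in> C \<Longrightarrow> x j \<noteq> 0" and fin: "finite ((\<lambda>x. x i / x j) ` C)"
  shows "\<exists>v. \<forall>x\<in>C. x i = v * x j"
proof -
  have Cc: "zclosed N C" and "C \<noteq> {}"
    and irr: "\<And>A B. zclosed N A \<Longrightarrow> zclosed N B \<Longrightarrow> C = A \<union> B \<Longrightarrow> C = A \<or> C = B"
    using C unfolding zirred_def by blast+
  have "finite W \<Longrightarrow> \<forall>x\<in>C. (\<Prod>w\<in>W. x i - w * x j) = 0 \<Longrightarrow> \<exists>v. \<forall>x\<in>C. x i = v * x j" for W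
  proof (induction W rule: finite_induct)
    case empty
    then show ?case using \<open>C \<noteq> {}\<close> by auto
  next
    case (insert w W)
    let ?A = "{x \<in> C. (\<Prod>w'\<in>{w}. x i - w' * x j) = 0}" and ?B = "{x \<in> C. (\<Prod>w\<in>W. x i - w * x j) = 0}"
    have "C = ?A \<union> ?B" using insert by auto
    moreover have "zclosed N ?A" by (rule zclosed_coord_ratio_in[OF Cc ij]) simp
    moreover have "zclosed N ?B" by (rule zclosed_coord_ratio_in[OF Cc ij insert(1)])
    ultimately have "C = ?A \<or> C = ?B" using irr by blast
    then show ?case
    proof
      assume "C = ?A"
      then have "\<forall>x\<in>C. x i = w * x j" by auto
      then show ?thesis by blast
    next
      assume "C = ?B"
      then show ?thesis using insert.IH by auto
    qed
  qed
  moreover have "(\<Prod>w\<in>(\<lambda>x. x i / x j) ` C. x i - w * x j) = 0" if "x \<in> C" for x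
  proof -
    have "x i - (x i / x j) * x j = 0" using nz[OF that] by simp
    moreover have "x i / x j \<in> (\<lambda>x. x i / x j) ` C" using that by blast
    ultimately show ?thesis using prod_zero_iff[OF fin] by blast
  qed
  ultimately show ?thesis using fin by blast
qed

lemma coords_proportional_if_hyperplane_avoided:
  assumes C: "zirred N C" "C \<inter> Delta N = {}" and j: "j \<le> N"
    and nz: "\<forall>x\<in>C. x j \<noteq> 0"
  obtains v where "\<And>i x. i \<le> N \<Longrightarrow> x \<in> C \<Longrightarrow> x i = v i * x j"
proof -
  have Cc: "zclosed N C" using C(1) unfolding zirred_def by blast
  have ratios: "\<forall>i\<in>{..N}. \<exists>v. \<forall>x\<in>C. x i = v * x j"
  proof
    fix i assume "i \<in> {..N}"
    then have i: "i \<le> N" by simp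
    show "\<exists>v. \<forall>x\<in>C. x i = v * x j"
    proof (cases "i = j")
      case False
      have fin: "finite ((\<lambda>x. x i / x j) ` C)"
        by (rule finite_coord_ratios[OF Cc C(2) i j False]) (use nz in blast)
      show ?thesis by (rule zirred_coord_ratio_const[OF C(1) i j _ fin]) (use nz in blast)
    qed (intro exI[of _ 1], simp)
  qed
  obtain v where v: "\<forall>i\<in>{..N}. \<forall>x\<in>C. x i = v i * x j"
    using bchoice[OF ratios] by blast
  show ?thesis by (rule that[of v]) (use v in simp)
qed

text \<open>Otherwise C would be a single point, which has no proper nonempty closed subset.\<close>

lemma irred_curve_meets_coord_hyperplane:
  assumes curve: "irred_curve N C" and C: "C \<inter> Delta N = {}" and j: "j \<le> N"
  shows "\<exists>x\<in>C. x j = 0"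
proof (rule ccontr)
  assume "\<not> ?thesis"
  then have nz: "\<forall>x\<in>C. x j \<noteq> 0" by blast
  have irr: "zirred N C" using curve unfolding irred_curve_def by blast
  then have Cc: "zclosed N C" unfolding zirred_def by blast
  obtain v where v: "\<And>i x. i \<le> N \<Longrightarrow> x \<in> C \<Longrightarrow> x i = v i * x j"
    using coords_proportional_if_hyperplane_avoided[OF irr C j nz] by blast
  obtain Z0 where Z0: "zirred N Z0" "Z0 \<subset> C" using curve unfolding irred_curve_def by blast
  then have Z0c: "zclosed N Z0" and "Z0 \<noteq> {}" unfolding zirred_def by blast+
  then obtain z where z: "z \<in> Z0" by blast
  have "x \<in> Z0" if x: "x \<in> C" for x
  proof -
    have zC: "z \<in> C" using z Z0(2) by blast
    then have "z j \<noteq> 0" using nz by blast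
    have "x = (\<lambda>k. (x j / z j) * z k)"
    proof
      fix k show "x k = (x j / z j) * z k"
      proof (cases "k \<le> N")
        case True
        have "x k = v k * x j" "z k = v k * z j" using v True x zC by auto
        then show ?thesis using \<open>z j \<noteq> 0\<close> by (simp only:) (simp add: field_simps)
      next
        case False
        have "x \<in> Pvec N" "z \<in> Pvec N" using x zC zclosed_subset_Pvec[OF Cc] by blast+
        then show ?thesis using False unfolding Pvec_def by simp
      qed
    qed
    moreover have "x j / z j \<noteq> 0" using nz x zC by simp
    then have "(\<lambda>k. (x j / z j) * z k) \<in> Z0" by (rule zclosed_scale[OF Z0c z])
    ultimately show ?thesis by simp
  qed
  then show False using Z0(2) by blast
qed

section \<open>Hadamard rank of coordinate points\<close>

lemma hprod_list_eq_0_iff: "hprod_list ps i = 0 \<longleftrightarrow> (\<exists>p\<in>set ps. p i = 0)"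
  unfolding hprod_list_def by (force simp: prod_list_zero_iff)

lemma Hrk_eq_enatI:
  assumes "hrep N C q m" "\<And>m'. hrep N C q m' \<Longrightarrow> m \<le> m'"
  shows "Hrk N C q = enat m"
  using assms unfolding Hrk_def by (auto intro!: Least_equality)

lemma hrep_coord_point_ge:
  assumes C: "C \<subseteq> Pvec N" "C \<inter> Delta N = {}" and k: "k \<le> N"
    and "hrep N C (coord_point k) m"
  shows "N \<le> m"
proof -
  obtain ps where ps: "length ps = m" "set ps \<subseteq> C" "proj_eq (coord_point k) (hprod_list ps)"
    using assms(4) unfolding hrep_def by blast
  obtain c where c: "c \<noteq> 0" "coord_point k = (\<lambda>i. c * hprod_list ps i)"
    using ps(3) unfolding proj_eq_def by blast
  have "\<exists>t<m. (ps ! t) i = 0" if i: "i \<in> {..N} - {k}" for i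
  proof -
    have "c * hprod_list ps i = coord_point k i" using c(2) by simp
    then have "hprod_list ps i = 0" using i c(1) by (simp add: coord_point_def)
    then show ?thesis using ps(1) by (auto simp: hprod_list_eq_0_iff in_set_conv_nth)
  qed
  then obtain t where t: "\<And>i. i \<in> {..N} - {k} \<Longrightarrow> t i < m \<and> (ps ! t i) i = 0" by metis
  have "inj_on t ({..N} - {k})"
  proof (rule inj_onI)
    fix i i' assume i: "i \<in> {..N} - {k}" "i' \<in> {..N} - {k}" "t i = t i'"
    then have "ps ! t i \<in> C" using t ps(1,2) nth_mem by blast
    moreover have "(ps ! t i) i = 0" using t[OF i(1)] by blast
    moreover have "(ps ! t i) i' = 0" using t[OF i(2)] i(3) by simp
    ultimately show "i = i'" using zero_coord_unique C i(1,2) by blast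
  qed
  then have "card ({..N} - {k}) \<le> card {..<m}" using t by (intro card_inj_on_le) auto
  then show ?thesis using k by simp
qed

lemma hrep_coord_point:
  assumes C: "C \<subseteq> Pvec N" "C \<inter> Delta N = {}" and k: "k \<le> N" and "1 \<le> N"
    and meets: "\<And>j. j \<le> N \<Longrightarrow> \<exists>x\<in>C. x j = 0"
  shows "hrep N C (coord_point k) N"
proof -
  obtain pt where pt: "\<And>j. j \<le> N \<Longrightarrow> pt j \<in> C \<and> pt j j = 0" using meets by metis
  define js where "js = filter (\<lambda>j. j \<noteq> k) [0..<Suc N]"
  define ps where "ps = map pt js"
  have js: "set js = {..N} - {k}" "distinct js" by (auto simp: js_def)
  then have set_ps: "set ps = pt ` ({..N} - {k})" by (simp add: ps_def)
  have len: "length ps = N" using distinct_card[OF js(2)] js(1) k by (simp add: ps_def)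
  have psC: "set ps \<subseteq> C" using set_ps pt by auto
  define c where "c = hprod_list ps k"
  have "p k \<noteq> 0" if p: "p \<in> set ps" for p
  proof
    assume "p k = 0"
    obtain j where j: "j \<le> N" "j \<noteq> k" "p = pt j" using p set_ps by auto
    then have "pt j \<in> Pvec N" "pt j \<notin> Delta N" using pt C by auto
    then show False using zero_coord_unique[of "pt j" N j k] pt j k \<open>p k = 0\<close> by auto
  qed
  then have "c \<noteq> 0" by (simp add: c_def hprod_list_eq_0_iff)
  have "hprod_list ps i = c * coord_point k i" for i
  proof (cases "i = k")
    case False
    have "\<exists>p\<in>set ps. p i = 0"
    proof (cases "i \<le> N")
      case True
      then show ?thesis using False pt set_ps by auto
    next
      case False
      obtain p where p: "p \<in> set ps" using len \<open>1 \<le> N\<close> by (cases ps) auto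
      then have "p \<in> Pvec N" using psC C(1) by blast
      then have "p i = 0" using False unfolding Pvec_def by auto
      then show ?thesis using p by blast
    qed
    then show ?thesis using False by (simp add: hprod_list_eq_0_iff coord_point_def)
  qed (simp add: c_def coord_point_def)
  then have hp: "hprod_list ps = (\<lambda>i. c * coord_point k i)" by blast
  have "hprod_list ps \<in> Pvec N"
    unfolding hp using coord_point_in_Pvec[OF k] \<open>c \<noteq> 0\<close> by (rule Pvec_scale)
  moreover have "proj_eq (coord_point k) (hprod_list ps)"
    unfolding proj_eq_def hp using \<open>c \<noteq> 0\<close> by (intro exI[of _ "1 / c"]) auto
  ultimately show ?thesis unfolding hrep_def using len psC \<open>1 \<le> N\<close> by blast
qed

theorem mainTheorem12:
  fixes N :: nat and C :: "(nat \<Rightarrow> complex) set"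
  assumes "N \<ge> 2"
    and "irred_curve N C"
    and "C \<inter> Delta N = {}"
  shows "\<forall>k\<le>N. Hrk N C (coord_point k) = enat N"
proof (intro allI impI)
  fix k assume k: "k \<le> N"
  have "zirred N C" using assms(2) unfolding irred_curve_def by blast
  then have C: "C \<subseteq> Pvec N" by (intro zclosed_subset_Pvec) (simp add: zirred_def)
  have "hrep N C (coord_point k) N"
  proof (rule hrep_coord_point[OF C assms(3) k])
    show "1 \<le> N" using assms(1) by simp
    show "\<exists>x\<in>C. x j = 0" if "j \<le> N" for j
      using irred_curve_meets_coord_hyperplane[OF assms(2,3) that] .
  qed
  then show "Hrk N C (coord_point k) = enat N"
    using hrep_coord_point_ge[OF C assms(3) k] by (rule Hrk_eq_enatI)
qed

end
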